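(* Let $\mathcal{H}$ be a real Hilbert space and $F:\mathcal{H}\rightrightarrows\mathcal{H}$ a set-valued operator with $\operatorname{zer}F:=\{x:0\in F(x)\}\neq\varnothing$. Let $(\gamma_n)_{n}\subset(0,+\infty)$, and let $(\alpha_n)_n$ be nondecreasing with $\alpha_n\in[0,\alpha]$ for all $n$, for some $\alpha\in[0,\tfrac13)$. Assume there is a linear map $v:\mathcal{H}\to\mathcal{H}$ such that the pair $(F,v)$ is monotone and, for every $n$, $\gamma_nF+v$ is injective and $\operatorname{ran}v\subset\operatorname{ran}(\gamma_nF+v)$. Let $x_0,x_1\in\mathcal{H}$ and for $n\ge1$ define \[ y_n=x_n+\alpha_n(x_n-x_{n-1}),\qquad x_{n+1}=(\gamma_nF+v)^{-1}\big(v(y_n)\big), \] i.e. $x_{n+1}$ is the unique point with $v(y_n)\in\gamma_nF(x_{n+1})+v(x_{n+1})$. Let $x^*\in\operatorname{zer}F$ and $a_n:=\|v(x_n)-v(x^* )\|^2$. Then (i) the sequence $(a_n)$ is bounded; (ii) $\sum_{n=1}^{\infty}\|v(x_n)-v(x_{n-1})\|^2<+\infty$.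
   Context: For set-valued $F_1,F_2:\mathcal{H}\rightrightarrows\mathcal{H}$, the pair $(F_1,F_2)$ is monotone if $\langle x_1^*-y_1^*,x_2^*-y_2^*\rangle\ge0$ for all $x,y\in\mathcal{H}$, $x_1^*\in F_1(x)$, $y_1^*\in F_1(y)$, $x_2^*\in F_2(x)$, $y_2^*\in F_2(y)$. $\operatorname{ran}$ denotes the range. *)

theory Defs
  imports "HOL-Analysis.Analysis"
begin

definition zer :: "('a::real_vector \<Rightarrow> 'a set) \<Rightarrow> 'a set" where
  "zer F = {x. 0 \<in> F x}"

definition ran_op :: "('a \<Rightarrow> 'b set) \<Rightarrow> 'b set" where
  "ran_op A = (\<Union>x. A x)"

definition op_inj :: "('a \<Rightarrow> 'b set) \<Rightarrow> bool" where
  "op_inj A \<longleftrightarrow> (\<forall>x y z. z \<in> A x \<and> z \<in> A y \<longrightarrow> x = y)"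

definition scale_add_op :: "real \<Rightarrow> ('a::real_vector \<Rightarrow> 'a set) \<Rightarrow> ('a \<Rightarrow> 'a) \<Rightarrow> 'a \<Rightarrow> 'a set" where
  "scale_add_op \<gamma> F v x = {\<gamma> *\<^sub>R u + v x | u. u \<in> F x}"

definition monotone_pair :: "('a::real_inner \<Rightarrow> 'a set) \<Rightarrow> ('a \<Rightarrow> 'a set) \<Rightarrow> bool" where
  "monotone_pair F1 F2 \<longleftrightarrow>
     (\<forall>x y x1 y1 x2 y2. x1 \<in> F1 x \<and> y1 \<in> F1 y \<and> x2 \<in> F2 x \<and> y2 \<in> F2 y
        \<longrightarrow> inner (x1 - y1) (x2 - y2) \<ge> 0)"

end

theory Submission
  imports Defs
begin

text \<open>Write \<open>\<phi>\<^sub>n = \<parallel>v x\<^sub>n - v x\<^sup>*\<parallel>\<^sup>2\<close> and \<open>\<delta>\<^sub>n = \<parallel>v x\<^sub>n - v x\<^sub>n\<^sub>-\<^sub>1\<parallel>\<^sup>2\<close>.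
  Since \<open>0 \<in> F x\<^sup>*\<close>, monotonicity of the pair \<open>(F, v)\<close> gives
  \<open>\<langle>v y\<^sub>n - v x\<^sub>n\<^sub>+\<^sub>1, v x\<^sub>n\<^sub>+\<^sub>1 - v x\<^sup>*\<rangle> \<ge> 0\<close>, and by linearity \<open>v y\<^sub>n\<close> is the
  inertial extrapolation of \<open>v x\<^sub>n\<close> and \<open>v x\<^sub>n\<^sub>-\<^sub>1\<close>. Expanding the norms turns this
  into the Alvarez--Attouch inequality
  \<open>\<phi>\<^sub>n\<^sub>+\<^sub>1 - (1 + \<alpha>\<^sub>n) \<phi>\<^sub>n + \<alpha>\<^sub>n \<phi>\<^sub>n\<^sub>-\<^sub>1 \<le> 2 \<alpha>\<^sub>n \<delta>\<^sub>n - (1 - \<alpha>\<^sub>n) \<delta>\<^sub>n\<^sub>+\<^sub>1\<close>.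
  For nondecreasing \<open>\<alpha>\<^sub>n \<le> \<alpha> < 1/3\<close> the energy
  \<open>\<mu>\<^sub>n = \<phi>\<^sub>n - \<alpha>\<^sub>n \<phi>\<^sub>n\<^sub>-\<^sub>1 + 2 \<alpha>\<^sub>n \<delta>\<^sub>n\<close> decreases by at least \<open>(1 - 3\<alpha>) \<delta>\<^sub>n\<^sub>+\<^sub>1\<close>.
  Hence \<open>\<phi>\<^sub>n\<^sub>+\<^sub>1 \<le> \<alpha> \<phi>\<^sub>n + \<mu>\<^sub>1\<close>, so \<open>\<phi>\<close> is bounded, so \<open>\<mu>\<close> is bounded below
  and the decrements \<open>\<delta>\<^sub>n\<close> are summable.\<close>

lemma le_max_of_affine_recurrence:
  fixes f :: "nat \<Rightarrow> real"
  assumes "0 \<le> a" "a < 1" "\<And>n. f (Suc n) \<le> a * f n + c"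
  shows "f n \<le> max (f 0) (c / (1 - a))"
proof (induction n)
  case 0
  then show ?case by simp
next
  case (Suc n)
  define M where "M = max (f 0) (c / (1 - a))"
  have "c / (1 - a) \<le> M"
    by (simp add: M_def)
  then have "c \<le> M - a * M"
    using \<open>a < 1\<close> by (simp add: pos_divide_le_eq algebra_simps)
  moreover have "a * f n \<le> a * M"
    using Suc.IH \<open>0 \<le> a\<close> by (simp add: M_def mult_left_mono)
  ultimately show ?case
    unfolding M_def[symmetric] using assms(3)[of n] by linarith
qed

lemma summable_of_descent:
  fixes \<mu> d :: "nat \<Rightarrow> real"
  assumes descent: "\<And>n. \<mu> (Suc n) + d n \<le> \<mu> n"
    and nonneg: "\<And>n. 0 \<le> d n"
    and lower: "\<And>n. L \<le> \<mu> n"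
  shows "summable d"
proof (rule summableI_nonneg_bounded)
  fix n
  have "\<mu> n + (\<Sum>k<n. d k) \<le> \<mu> 0"
  proof (induction n)
    case (Suc n)
    then show ?case using descent[of n] by simp
  qed simp
  then show "(\<Sum>k<n. d k) \<le> \<mu> 0 - L"
    using lower[of n] by simp
qed (rule nonneg)

definition inertial_energy :: "(nat \<Rightarrow> real) \<Rightarrow> (nat \<Rightarrow> real) \<Rightarrow> (nat \<Rightarrow> real) \<Rightarrow> nat \<Rightarrow> real"
  where "inertial_energy \<alpha>s \<phi> \<delta> n = \<phi> n - \<alpha>s n * \<phi> (n - 1) + 2 * \<alpha>s n * \<delta> n"

lemma inertial_energy_descent:
  fixes \<phi> \<delta> \<alpha>s :: "nat \<Rightarrow> real" and \<alpha> :: real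
  assumes "\<And>n. 0 \<le> \<phi> n" "\<And>n. 0 \<le> \<delta> n" "mono \<alpha>s"
    and \<alpha>s_bounds: "\<And>n. 0 \<le> \<alpha>s n \<and> \<alpha>s n \<le> \<alpha>"
    and inertial: "\<phi> (Suc n) - (1 + \<alpha>s n) * \<phi> n + \<alpha>s n * \<phi> (n - 1)
        \<le> 2 * \<alpha>s n * \<delta> n - (1 - \<alpha>s n) * \<delta> (Suc n)"
  shows "inertial_energy \<alpha>s \<phi> \<delta> (Suc n) + (1 - 3 * \<alpha>) * \<delta> (Suc n)
    \<le> inertial_energy \<alpha>s \<phi> \<delta> n"
proof -
  have "\<alpha>s n * \<phi> n \<le> \<alpha>s (Suc n) * \<phi> n"
    using assms(1,3) by (simp add: mono_def mult_right_mono)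
  moreover have "\<alpha>s n * \<delta> (Suc n) \<le> \<alpha> * \<delta> (Suc n)"
    using \<alpha>s_bounds[of n] assms(2) by (simp add: mult_right_mono)
  moreover have "\<alpha>s (Suc n) * \<delta> (Suc n) \<le> \<alpha> * \<delta> (Suc n)"
    using \<alpha>s_bounds[of "Suc n"] assms(2) by (simp add: mult_right_mono)
  ultimately show ?thesis
    using inertial unfolding inertial_energy_def by (simp add: algebra_simps)
qed

lemma inertial_energy_lower_bound:
  fixes \<phi> \<delta> \<alpha>s :: "nat \<Rightarrow> real" and \<alpha> :: real
  assumes "\<And>n. 0 \<le> \<phi> n" "\<And>n. 0 \<le> \<delta> n" "\<And>n. 0 \<le> \<alpha>s n \<and> \<alpha>s n \<le> \<alpha>"
  shows "\<phi> (Suc n) - \<alpha> * \<phi> n \<le> inertial_energy \<alpha>s \<phi> \<delta> (Suc n)"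
proof -
  have "\<alpha>s (Suc n) * \<phi> n \<le> \<alpha> * \<phi> n"
    using assms(1,3) by (simp add: mult_right_mono)
  moreover have "0 \<le> \<alpha>s (Suc n) * \<delta> (Suc n)"
    using assms(2,3) by simp
  ultimately show ?thesis
    by (simp add: inertial_energy_def)
qed

lemma inertial_sequence_bounded_summable:
  fixes \<phi> \<delta> \<alpha>s :: "nat \<Rightarrow> real" and \<alpha> :: real
  assumes \<phi>_nonneg: "\<And>n. 0 \<le> \<phi> n"
    and \<delta>_nonneg: "\<And>n. 0 \<le> \<delta> n"
    and \<alpha>s_mono: "mono \<alpha>s"
    and \<alpha>s_bounds: "\<And>n. 0 \<le> \<alpha>s n \<and> \<alpha>s n \<le> \<alpha>"
    and \<alpha>_small: "\<alpha> < 1/3"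
    and inertial: "\<And>n. 1 \<le> n \<Longrightarrow>
      \<phi> (Suc n) - (1 + \<alpha>s n) * \<phi> n + \<alpha>s n * \<phi> (n - 1)
        \<le> 2 * \<alpha>s n * \<delta> n - (1 - \<alpha>s n) * \<delta> (Suc n)"
  shows "bounded (range \<phi>) \<and> summable (\<lambda>n. \<delta> (Suc n))"
proof -
  have "0 \<le> \<alpha>"
    using \<alpha>s_bounds[of 0] by linarith
  define \<mu> where "\<mu> = inertial_energy \<alpha>s \<phi> \<delta>"
  have descent: "\<mu> (Suc (Suc n)) + (1 - 3 * \<alpha>) * \<delta> (Suc (Suc n)) \<le> \<mu> (Suc n)" for n
    unfolding \<mu>_def using assms(1-4) inertial[of "Suc n"] by (rule inertial_energy_descent) simp
  have \<mu>_lower: "\<phi> (Suc n) - \<alpha> * \<phi> n \<le> \<mu> (Suc n)" for n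
    unfolding \<mu>_def using \<phi>_nonneg \<delta>_nonneg \<alpha>s_bounds by (rule inertial_energy_lower_bound)
  have "\<mu> (Suc n) \<le> \<mu> (Suc 0)" for n
  proof (rule decseqD[of "\<lambda>n. \<mu> (Suc n)"])
    show "decseq (\<lambda>n. \<mu> (Suc n))"
    proof (rule decseq_SucI)
      fix n
      have "0 \<le> (1 - 3 * \<alpha>) * \<delta> (Suc (Suc n))"
        using \<alpha>_small \<delta>_nonneg by simp
      then show "\<mu> (Suc (Suc n)) \<le> \<mu> (Suc n)"
        using descent[of n] by simp
    qed
  qed simp
  then have \<phi>_recurrence: "\<phi> (Suc n) \<le> \<alpha> * \<phi> n + \<mu> 1" for n
    using \<mu>_lower by (metis One_nat_def add.commute diff_le_eq order_trans)
  define M where "M = max (\<phi> 0) (\<mu> 1 / (1 - \<alpha>))"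
  then have \<phi>_le_M: "\<phi> n \<le> M" for n
    using le_max_of_affine_recurrence[of \<alpha> \<phi> "\<mu> 1"] \<phi>_recurrence \<open>0 \<le> \<alpha>\<close> \<alpha>_small
    by (simp add: M_def)
  have "bounded (range \<phi>)"
    unfolding bounded_real using \<phi>_le_M \<phi>_nonneg by (metis abs_of_nonneg rangeE)
  moreover have "summable (\<lambda>n. (1 - 3 * \<alpha>) * \<delta> (Suc (Suc n)))"
  proof (rule summable_of_descent[where \<mu> = "\<lambda>n. \<mu> (Suc n)"])
    show "\<mu> (Suc (Suc n)) + (1 - 3 * \<alpha>) * \<delta> (Suc (Suc n)) \<le> \<mu> (Suc n)" for n
      by (rule descent)
    show "0 \<le> (1 - 3 * \<alpha>) * \<delta> (Suc (Suc n))" for n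
      using \<alpha>_small \<delta>_nonneg by simp
    show "- \<alpha> * M \<le> \<mu> (Suc n)" for n
    proof -
      have "\<alpha> * \<phi> n \<le> \<alpha> * M"
        using \<phi>_le_M[of n] \<open>0 \<le> \<alpha>\<close> by (rule mult_left_mono)
      then show ?thesis
        using \<mu>_lower[of n] \<phi>_nonneg[of "Suc n"] by simp
    qed
  qed
  then have "summable (\<lambda>n. \<delta> (Suc (Suc n)))"
    using \<alpha>_small by (simp add: summable_cmult_iff)
  then have "summable (\<lambda>n. \<delta> (Suc n))"
    using summable_Suc_iff[of "\<lambda>n. \<delta> (Suc n)"] by blast
  ultimately show ?thesis ..
qed

lemma inertial_norm_inequality:
  fixes a b c p :: "'a::real_inner" and t :: real
  assumes "0 \<le> t" "0 \<le> inner (b + t *\<^sub>R (b - a) - c) (c - p)"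
  shows "(norm (c - p))\<^sup>2 - (1 + t) * (norm (b - p))\<^sup>2 + t * (norm (a - p))\<^sup>2
    \<le> 2 * t * (norm (b - a))\<^sup>2 - (1 - t) * (norm (c - b))\<^sup>2"
proof -
  have "(norm (c - p))\<^sup>2 - (1 + t) * (norm (b - p))\<^sup>2 + t * (norm (a - p))\<^sup>2
      = 2 * t * (norm (b - a))\<^sup>2 - (1 - t) * (norm (c - b))\<^sup>2
        - 2 * inner (b + t *\<^sub>R (b - a) - c) (c - p) - t * (norm (a - 2 *\<^sub>R b + c))\<^sup>2"
    unfolding power2_norm_eq_inner by (simp add: inner_commute algebra_simps)
  moreover have "0 \<le> t * (norm (a - 2 *\<^sub>R b + c))\<^sup>2"
    using assms(1) by simp
  ultimately show ?thesis
    using assms(2) by linarith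
qed

lemma monotone_pair_step_inner_nonneg:
  assumes "monotone_pair F (\<lambda>z. {v z})" "0 < \<gamma>"
    and "w \<in> scale_add_op \<gamma> F v z" "p \<in> zer F"
  shows "0 \<le> inner (w - v z) (v z - v p)"
proof -
  obtain u where "u \<in> F z" and w: "w = \<gamma> *\<^sub>R u + v z"
    using assms(3) unfolding scale_add_op_def by blast
  moreover have "0 \<in> F p"
    using assms(4) unfolding zer_def by simp
  ultimately have "0 \<le> inner (u - 0) (v z - v p)"
    using assms(1) unfolding monotone_pair_def by blast
  then show ?thesis
    using \<open>0 < \<gamma>\<close> by (simp add: w)
qed

text \<open>The injectivity and range hypotheses only ensure that the iteration is well defined.\<close>

theorem corollary4p1:
  fixes F :: "'a::{real_inner, complete_space} \<Rightarrow> 'a set"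
    and v :: "'a \<Rightarrow> 'a"
    and \<gamma> \<alpha>s :: "nat \<Rightarrow> real"
    and \<alpha> :: real
    and x y :: "nat \<Rightarrow> 'a"
    and xstar :: 'a
  assumes zer_ne: "zer F \<noteq> {}"
    and gamma_pos: "\<And>n. \<gamma> n > 0"
    and alpha_mono: "mono \<alpha>s"
    and alpha_bnd: "\<And>n. 0 \<le> \<alpha>s n \<and> \<alpha>s n \<le> \<alpha>"
    and alpha_range: "0 \<le> \<alpha>" "\<alpha> < 1/3"
    and v_lin: "linear v"
    and mono_pair: "monotone_pair F (\<lambda>z. {v z})"
    and inj: "\<And>n. op_inj (scale_add_op (\<gamma> n) F v)"
    and ran: "\<And>n. range v \<subseteq> ran_op (scale_add_op (\<gamma> n) F v)"
    and y_def: "\<And>n. n \<ge> 1 \<Longrightarrow> y n = x n + \<alpha>s n *\<^sub>R (x n - x (n - 1))"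
    and x_step: "\<And>n. n \<ge> 1 \<Longrightarrow> v (y n) \<in> scale_add_op (\<gamma> n) F v (x (Suc n))"
    and xstar_zer: "xstar \<in> zer F"
  shows "bounded (range (\<lambda>n. (norm (v (x n) - v xstar))\<^sup>2)) \<and>
         summable (\<lambda>n. (norm (v (x (Suc n)) - v (x n)))\<^sup>2)"
proof -
  define \<phi> where "\<phi> n = (norm (v (x n) - v xstar))\<^sup>2" for n
  define \<delta> where "\<delta> n = (norm (v (x n) - v (x (n - 1))))\<^sup>2" for n
  have "\<phi> (Suc n) - (1 + \<alpha>s n) * \<phi> n + \<alpha>s n * \<phi> (n - 1)
      \<le> 2 * \<alpha>s n * \<delta> n - (1 - \<alpha>s n) * \<delta> (Suc n)" if "1 \<le> n" for n
  proof -
    have "v (y n) = v (x n) + \<alpha>s n *\<^sub>R (v (x n) - v (x (n - 1)))"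
      using y_def[OF that] v_lin by (simp add: linear_add linear_diff linear_scale)
    moreover have "0 \<le> inner (v (y n) - v (x (Suc n))) (v (x (Suc n)) - v xstar)"
      using mono_pair gamma_pos x_step[OF that] xstar_zer by (rule monotone_pair_step_inner_nonneg)
    ultimately show ?thesis
      using inertial_norm_inequality[of "\<alpha>s n" "v (x n)" "v (x (n - 1))" "v (x (Suc n))" "v xstar"]
        alpha_bnd[of n]
      unfolding \<phi>_def \<delta>_def by simp
  qed
  then have "bounded (range \<phi>) \<and> summable (\<lambda>n. \<delta> (Suc n))"
    using alpha_mono alpha_bnd alpha_range
    by (intro inertial_sequence_bounded_summable) (auto simp: \<phi>_def \<delta>_def)
  then show ?thesis
    by (simp add: \<phi>_def \<delta>_def)
qed

end
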